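(* Let $D$ be a connection on a vector bundle $E$ that is generic. Then (1) the curvature $\kappa:E\to\Lambda^2\otimes E$ of $D$ is injective, and (2) $D$ is exact.
   Context: $\kappa_{ab}{}^\alpha{}_\beta\phi^\beta=\tfrac12(D_aD_b-D_bD_a)\phi^\alpha$ is the curvature; $\kappa^{(1)}:\Lambda^1\otimes E\to\Lambda^3\otimes E$ is $\phi_c{}^\alpha\mapsto\kappa_{[ab}{}^\alpha{}_{|\beta|}\phi_{c]}{}^\beta$ (which equals $(D^\wedge)^2$, $D^\wedge$ the exterior covariant derivative). $D$ is generic if $\kappa^{(1)}$ is injective. $D$ is exact if every section $\phi$ of $\Lambda^1\otimes E$ with $D^\wedge\phi=\kappa(\psi)$ for some section $\psi$ of $E$ is of the form $D\eta$ for some section $\eta$ of $E$ (statements local; curvature assumed of constant rank). *)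

theory Defs
  imports "HOL-Analysis.Analysis"
begin

text \<open>Local setting: base = open set U in real^'n (a chart), bundle E trivialised
  over U with fibre real^'m.  Sections are functions real^'n => real^'m.\<close>

definition pd :: "'n::finite \<Rightarrow> (real^'n \<Rightarrow> 'b::real_normed_vector) \<Rightarrow> real^'n \<Rightarrow> 'b" where
  "pd a f x = frechet_derivative f (at x) (axis a 1)"

fun iter_pd :: "'n::finite list \<Rightarrow> (real^'n \<Rightarrow> 'b::real_normed_vector) \<Rightarrow> real^'n \<Rightarrow> 'b" where
  "iter_pd [] f = f"
| "iter_pd (a # as) f = pd a (iter_pd as f)"

definition smooth_on :: "(real^'n::finite) set \<Rightarrow> (real^'n \<Rightarrow> 'b::real_normed_vector) \<Rightarrow> bool" where
  "smooth_on U f \<longleftrightarrow> (\<forall>as. \<forall>x\<in>U. iter_pd as f differentiable (at x))"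

text \<open>Connection D = d + Gamma in the local frame: D_a eta = partial_a eta + Gamma_a eta.\<close>
definition covD :: "('n::finite \<Rightarrow> real^'n \<Rightarrow> real^'m::finite^'m) \<Rightarrow> 'n \<Rightarrow> (real^'n \<Rightarrow> real^'m) \<Rightarrow> real^'n \<Rightarrow> real^'m" where
  "covD \<Gamma> a \<eta> x = pd a \<eta> x + \<Gamma> a x *v \<eta> x"

text \<open>Curvature kappa_ab = 1/2 (D_a D_b - D_b D_a), as an endomorphism of the fibre.\<close>
definition curv :: "('n::finite \<Rightarrow> real^'n \<Rightarrow> real^'m::finite^'m) \<Rightarrow> 'n \<Rightarrow> 'n \<Rightarrow> real^'n \<Rightarrow> real^'m^'m" where
  "curv \<Gamma> a b x = (1/2) *\<^sub>R (pd a (\<Gamma> b) x - pd b (\<Gamma> a) x + \<Gamma> a x ** \<Gamma> b x - \<Gamma> b x ** \<Gamma> a x)"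

definition kappa :: "('n::finite \<Rightarrow> real^'n \<Rightarrow> real^'m::finite^'m) \<Rightarrow> real^'n \<Rightarrow> real^'m \<Rightarrow> ('n \<Rightarrow> 'n \<Rightarrow> real^'m)" where
  "kappa \<Gamma> x v = (\<lambda>a b. curv \<Gamma> a b x *v v)"

text \<open>kappa^(1) : Lambda^1 (x) E -> Lambda^3 (x) E at x,
  phi_c |-> kappa_[ab phi_c] (skew-symmetrisation; since kappa_ab is skew in a b
  this is one third of the cyclic sum).\<close>
definition kappa1 :: "('n::finite \<Rightarrow> real^'n \<Rightarrow> real^'m::finite^'m) \<Rightarrow> real^'n \<Rightarrow> ('n \<Rightarrow> real^'m) \<Rightarrow> ('n \<Rightarrow> 'n \<Rightarrow> 'n \<Rightarrow> real^'m)" where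
  "kappa1 \<Gamma> x \<phi> = (\<lambda>a b c. (1/3) *\<^sub>R (curv \<Gamma> a b x *v \<phi> c + curv \<Gamma> b c x *v \<phi> a + curv \<Gamma> c a x *v \<phi> b))"

definition extD :: "('n::finite \<Rightarrow> real^'n \<Rightarrow> real^'m::finite^'m) \<Rightarrow> ('n \<Rightarrow> real^'n \<Rightarrow> real^'m) \<Rightarrow> 'n \<Rightarrow> 'n \<Rightarrow> real^'n \<Rightarrow> real^'m" where
  "extD \<Gamma> \<phi> a b x = (1/2) *\<^sub>R (covD \<Gamma> a (\<phi> b) x - covD \<Gamma> b (\<phi> a) x)"

definition connection_on :: "(real^'n::finite) set \<Rightarrow> ('n \<Rightarrow> real^'n \<Rightarrow> real^'m::finite^'m) \<Rightarrow> bool" where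
  "connection_on U \<Gamma> \<longleftrightarrow> open U \<and> (\<forall>a. smooth_on U (\<Gamma> a))"

definition generic :: "(real^'n::finite) set \<Rightarrow> ('n \<Rightarrow> real^'n \<Rightarrow> real^'m::finite^'m) \<Rightarrow> bool" where
  "generic U \<Gamma> \<longleftrightarrow> (\<forall>x\<in>U. inj (kappa1 \<Gamma> x))"

definition exact :: "(real^'n::finite) set \<Rightarrow> ('n \<Rightarrow> real^'n \<Rightarrow> real^'m::finite^'m) \<Rightarrow> bool" where
  "exact U \<Gamma> \<longleftrightarrow>
    (\<forall>W \<phi> \<psi>. open W \<and> W \<subseteq> U \<and> (\<forall>c. smooth_on W (\<phi> c)) \<and> smooth_on W \<psi> \<and>
       (\<forall>x\<in>W. \<forall>a b. extD \<Gamma> \<phi> a b x = kappa \<Gamma> x (\<psi> x) a b) \<longrightarrow>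
       (\<forall>x\<in>W. \<exists>V \<eta>. open V \<and> x \<in> V \<and> V \<subseteq> W \<and> smooth_on V \<eta> \<and>
                 (\<forall>y\<in>V. \<forall>c. \<phi> c y = covD \<Gamma> c \<eta> y)))"

end

theory Submission
  imports Defs
begin

text \<open>Put P := phi - D psi. The hypothesis D^wedge phi = kappa(psi) and the identity
  D^wedge D psi = kappa(psi) give D^wedge P = 0 near every point; applying D^wedge once more and
  using (D^wedge)^2 = kappa^(1) yields kappa^(1)(P) = 0, so P = 0 by genericity and phi = D psi.
  Injectivity of kappa is the special case of constant 1-forms: kappa^(1) of the constant form v
  is the cyclic sum of kappa(v). Both curvature identities rest on the symmetry of second partial
  derivatives, which is proved in Young's form (the first partials need only be differentiable
  at the point) by comparing second differences.\<close>

lemma has_vector_derivative_along_line: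
  assumes "f differentiable at (p + t *\<^sub>R u)"
  shows "((\<lambda>t. f (p + t *\<^sub>R u)) has_vector_derivative frechet_derivative f (at (p + t *\<^sub>R u)) u) (at t)"
proof -
  have line: "((\<lambda>t. p + t *\<^sub>R u) has_derivative (\<lambda>h. h *\<^sub>R u)) (at t)"
    by (auto intro!: derivative_eq_intros)
  have "linear (frechet_derivative f (at (p + t *\<^sub>R u)))"
    using assms frechet_derivative_works has_derivative_linear by blast
  then show ?thesis
    using diff_chain_at[OF line frechet_derivative_works[THEN iffD1, OF assms]]
    by (simp add: has_vector_derivative_def o_def linear_scale)
qed

lemma second_difference_estimate:
  fixes f :: "'a::real_normed_vector \<Rightarrow> 'b::real_normed_vector"
  assumes near: "\<And>z. norm (z - x) < d \<Longrightarrow> f differentiable at z \<and>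
      norm (frechet_derivative f (at z) u - frechet_derivative f (at x) u - L (z - x)) \<le> e * norm (z - x)"
    and e: "0 \<le> e" and L: "linear L" and s: "0 < s" "s * (norm u + norm v) < d"
  shows "norm (f (x + s *\<^sub>R v + s *\<^sub>R u) - f (x + s *\<^sub>R u) - f (x + s *\<^sub>R v) + f x - (s * s) *\<^sub>R L v)
    \<le> 2 * e * (norm u + norm v) * s * s"
proof -
  define g where "g z = frechet_derivative f (at z) u" for z
  define H where "H t = f (x + s *\<^sub>R v + t *\<^sub>R u) - f (x + t *\<^sub>R u) - t *\<^sub>R (s *\<^sub>R L v)" for t
  define H' where "H' t = g (x + s *\<^sub>R v + t *\<^sub>R u) - g (x + t *\<^sub>R u) - s *\<^sub>R L v" for t
  have close: "norm (x + r *\<^sub>R v + t *\<^sub>R u - x) \<le> s * (norm u + norm v)"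
    if "r \<in> {0..s}" "t \<in> {0..s}" for r t
  proof -
    have "norm (r *\<^sub>R v + t *\<^sub>R u) \<le> r * norm v + t * norm u"
      using that norm_triangle_ineq[of "r *\<^sub>R v" "t *\<^sub>R u"] by simp
    also have "\<dots> \<le> s * (norm u + norm v)"
      using that mult_right_mono[of r s "norm v"] mult_right_mono[of t s "norm u"]
      by (simp add: distrib_left)
    finally show ?thesis by simp
  qed
  have deriv: "(H has_vector_derivative H' t) (at t within {0..s})" if "t \<in> {0..s}" for t
  proof -
    have "f differentiable at (x + s *\<^sub>R v + t *\<^sub>R u)" "f differentiable at (x + t *\<^sub>R u)"
      using near close[of s t] close[of 0 t] that s by auto
    moreover have "((\<lambda>t. t *\<^sub>R c) has_vector_derivative c) (at t)" for c :: 'b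
      unfolding has_vector_derivative_def by (rule has_derivative_scaleR_left[OF has_derivative_ident])
    ultimately have "(H has_vector_derivative H' t) (at t)"
      unfolding H_def H'_def g_def
      by (intro has_vector_derivative_diff has_vector_derivative_along_line)
    then show ?thesis
      by (rule has_vector_derivative_at_within)
  qed
  have bound: "norm (H' t) \<le> 2 * e * (norm u + norm v) * s" if "t \<in> {0..s}" for t
  proof -
    define p q where "p = x + s *\<^sub>R v + t *\<^sub>R u" and "q = x + t *\<^sub>R u"
    have p: "norm (p - x) \<le> s * (norm u + norm v)" and q: "norm (q - x) \<le> s * (norm u + norm v)"
      using close[of s t] close[of 0 t] that s unfolding p_def q_def by auto
    have "H' t = (g p - g x - L (p - x)) - (g q - g x - L (q - x))"
      unfolding H'_def p_def q_def by (simp add: linear_diff[OF L] linear_add[OF L] linear_scale[OF L])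
    also have "norm \<dots> \<le> norm (g p - g x - L (p - x)) + norm (g q - g x - L (q - x))"
      by (rule norm_triangle_ineq4)
    also have "\<dots> \<le> e * norm (p - x) + e * norm (q - x)"
      using near[of p] near[of q] p q s(2) unfolding g_def by (intro add_mono) auto
    also have "\<dots> \<le> 2 * e * (norm u + norm v) * s"
      using mult_left_mono[OF p e] mult_left_mono[OF q e] by (simp add: algebra_simps)
    finally show ?thesis .
  qed
  have onorm_H': "onorm (\<lambda>h. h *\<^sub>R H' t) = norm (H' t)" for t
    by (simp add: onorm_scaleR_left[OF bounded_linear_ident] onorm_id)
  have "norm (H s - H 0) \<le> 2 * e * (norm u + norm v) * s * norm (s - 0)"
    using deriv bound s(1) unfolding has_vector_derivative_def
    by (intro differentiable_bound[where S="{0..s}"]) (auto simp: onorm_H')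
  moreover have "H s - H 0 = f (x + s *\<^sub>R v + s *\<^sub>R u) - f (x + s *\<^sub>R u) - f (x + s *\<^sub>R v) + f x - (s * s) *\<^sub>R L v"
    unfolding H_def by (simp add: algebra_simps)
  ultimately show ?thesis
    using s(1) by simp
qed

lemma second_difference_quotient_tendsto:
  fixes f :: "'a::real_normed_vector \<Rightarrow> 'b::real_normed_vector"
  assumes diff: "\<forall>\<^sub>F z in nhds x. f differentiable at z"
    and L: "((\<lambda>z. frechet_derivative f (at z) u) has_derivative L) (at x)"
  shows "((\<lambda>s. (f (x + s *\<^sub>R v + s *\<^sub>R u) - f (x + s *\<^sub>R u) - f (x + s *\<^sub>R v) + f x) /\<^sub>R (s * s))
    \<longlongrightarrow> L v) (at_right 0)"
proof (rule tendstoI)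
  fix e :: real
  assume e: "0 < e"
  define N where "N = norm u + norm v + 1"
  have N: "0 < N" "norm u + norm v < N"
    unfolding N_def by (simp_all add: add_nonneg_pos)
  define e' where "e' = e / (2 * N)"
  have e': "0 < e'" "2 * e' * (norm u + norm v) < e"
    using e N mult_strict_left_mono[OF N(2) e] by (simp_all add: e'_def field_simps)
  have Llin: "linear L"
    using L has_derivative_linear by blast
  obtain d' where "0 < d'" and "\<forall>z. norm (z - x) < d' \<longrightarrow>
      norm (frechet_derivative f (at z) u - frechet_derivative f (at x) u - L (z - x)) \<le> e' * norm (z - x)"
    using conjunct2[OF L[unfolded has_derivative_at_alt]] e'(1) by blast
  then have "\<forall>\<^sub>F z in nhds x. norm (frechet_derivative f (at z) u - frechet_derivative f (at x) u - L (z - x))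
      \<le> e' * norm (z - x)"
    unfolding eventually_nhds_metric dist_norm by blast
  from eventually_conj[OF diff this] obtain d where d: "0 < d" and near: "\<And>z. dist z x < d \<Longrightarrow> f differentiable at z \<and>
      norm (frechet_derivative f (at z) u - frechet_derivative f (at x) u - L (z - x)) \<le> e' * norm (z - x)"
    unfolding eventually_nhds_metric by blast
  define \<Delta> where "\<Delta> s = f (x + s *\<^sub>R v + s *\<^sub>R u) - f (x + s *\<^sub>R u) - f (x + s *\<^sub>R v) + f x" for s
  have "dist (\<Delta> s /\<^sub>R (s * s)) (L v) < e" if s: "0 < s" "s < d / N" for s
  proof -
    have "s * (norm u + norm v) < d"
      using s N mult_strict_left_mono[OF N(2) s(1)] by (simp add: field_simps)
    then have "norm (\<Delta> s - (s * s) *\<^sub>R L v) \<le> 2 * e' * (norm u + norm v) * (s * s)"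
      unfolding \<Delta>_def using near e'(1) Llin s(1)
      by (simp only: mult.assoc) (intro second_difference_estimate[simplified mult.assoc]; auto simp: dist_norm)
    also have "\<dots> < e * (s * s)"
      using e'(2) s(1) by (intro mult_strict_right_mono) auto
    also have "\<Delta> s - (s * s) *\<^sub>R L v = (s * s) *\<^sub>R (\<Delta> s /\<^sub>R (s * s) - L v)"
      using s(1) by (simp add: scaleR_diff_right field_simps)
    finally show ?thesis
      using s(1) by (simp add: dist_norm)
  qed
  then show "\<forall>\<^sub>F s in at_right 0. dist (\<Delta> s /\<^sub>R (s * s)) (L v) < e"
    unfolding eventually_at_right_field using d N(1) by (intro exI[of _ "d / N"]) auto
qed

lemma frechet_derivative_commute:
  fixes f :: "'a::real_normed_vector \<Rightarrow> 'b::real_normed_vector"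
  assumes "\<forall>\<^sub>F z in nhds x. f differentiable at z"
    and "(\<lambda>z. frechet_derivative f (at z) u) differentiable at x"
    and "(\<lambda>z. frechet_derivative f (at z) v) differentiable at x"
  shows "frechet_derivative (\<lambda>z. frechet_derivative f (at z) u) (at x) v
    = frechet_derivative (\<lambda>z. frechet_derivative f (at z) v) (at x) u"
proof (rule tendsto_unique[OF trivial_limit_at_right_real])
  show "((\<lambda>s. (f (x + s *\<^sub>R v + s *\<^sub>R u) - f (x + s *\<^sub>R u) - f (x + s *\<^sub>R v) + f x) /\<^sub>R (s * s))
      \<longlongrightarrow> frechet_derivative (\<lambda>z. frechet_derivative f (at z) u) (at x) v) (at_right 0)"
    using assms(2) unfolding frechet_derivative_works by (rule second_difference_quotient_tendsto[OF assms(1)])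
  show "((\<lambda>s. (f (x + s *\<^sub>R v + s *\<^sub>R u) - f (x + s *\<^sub>R u) - f (x + s *\<^sub>R v) + f x) /\<^sub>R (s * s))
      \<longlongrightarrow> frechet_derivative (\<lambda>z. frechet_derivative f (at z) v) (at x) u) (at_right 0)"
    using second_difference_quotient_tendsto[OF assms(1), of v, OF assms(3)[unfolded frechet_derivative_works], of u]
    by (simp add: algebra_simps)
qed

lemma pd_eqI: "(f has_derivative F) (at x) \<Longrightarrow> pd a f x = F (axis a 1)"
  by (simp add: pd_def flip: frechet_derivative_at)

lemma pd_const: "pd a (\<lambda>y. c) x = 0"
  by (rule pd_eqI[OF has_derivative_const, THEN trans]) simp

lemma pd_add:
  assumes "f differentiable at x" "g differentiable at x"
  shows "pd a (\<lambda>y. f y + g y) x = pd a f x + pd a g x"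
  using pd_eqI[OF has_derivative_add[OF assms[unfolded frechet_derivative_works]]]
  by (simp add: pd_def)

lemma pd_diff:
  assumes "f differentiable at x" "g differentiable at x"
  shows "pd a (\<lambda>y. f y - g y) x = pd a f x - pd a g x"
  using pd_eqI[OF has_derivative_diff[OF assms[unfolded frechet_derivative_works]]]
  by (simp add: pd_def)

lemma pd_scaleR:
  assumes "f differentiable at x"
  shows "pd a (\<lambda>y. r *\<^sub>R f y) x = r *\<^sub>R pd a f x"
  using pd_eqI[OF has_derivative_scaleR_right[OF assms[unfolded frechet_derivative_works]]]
  by (simp add: pd_def)

lemma (in bounded_bilinear) pd_prod:
  assumes "f differentiable at x" "g differentiable at x"
  shows "pd a (\<lambda>y. prod (f y) (g y)) x = prod (f x) (pd a g x) + prod (pd a f x) (g x)"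
  using pd_eqI[OF FDERIV[OF assms[unfolded frechet_derivative_works]]]
  by (simp add: pd_def)

lemma (in bounded_bilinear) differentiable_prod:
  assumes "f differentiable at x" "g differentiable at x"
  shows "(\<lambda>y. prod (f y) (g y)) differentiable at x"
  using FDERIV[OF assms[unfolded frechet_derivative_works]] by (rule differentiableI)

lemma has_derivative_cong_nhds:
  assumes "\<forall>\<^sub>F y in nhds x. f y = g y"
  shows "(f has_derivative F) (at x) \<longleftrightarrow> (g has_derivative F) (at x)"
proof -
  have "\<forall>\<^sub>F y in at x. f y = g y" "\<forall>\<^sub>F y in at x. g y = f y" "f x = g x"
    using assms unfolding eventually_nhds_conv_at by (auto elim: eventually_mono)
  then show ?thesis
    using has_derivative_transform_eventually[of f F x UNIV g]
      has_derivative_transform_eventually[of g F x UNIV f] by auto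
qed

lemma differentiable_cong_nhds:
  "\<forall>\<^sub>F y in nhds x. f y = g y \<Longrightarrow> f differentiable at x \<longleftrightarrow> g differentiable at x"
  unfolding differentiable_def by (simp add: has_derivative_cong_nhds)

lemma pd_cong_nhds: "\<forall>\<^sub>F y in nhds x. f y = g y \<Longrightarrow> pd a f x = pd a g x"
  unfolding pd_def frechet_derivative_def by (simp add: has_derivative_cong_nhds)

lemma bounded_bilinear_matrix_vector_mult:
  "bounded_bilinear ((*v) :: real^'n::finite^'m::finite \<Rightarrow> real^'n \<Rightarrow> real^'m)"
  unfolding bilinear_conv_bounded_bilinear[symmetric] bilinear_def linear_iff
  by (simp add: matrix_vector_mult_add_rdistrib matrix_vector_right_distrib
      scaleR_matrix_vector_assoc matrix_vector_mult_scaleR)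

lemmas pd_matrix_vector_mult = bounded_bilinear.pd_prod[OF bounded_bilinear_matrix_vector_mult]
lemmas differentiable_matrix_vector_mult =
  bounded_bilinear.differentiable_prod[OF bounded_bilinear_matrix_vector_mult]

text \<open>Since the derivative at y is determined linearly by the partials pd a f y, this is
  differentiability of the derivative map at x.\<close>
definition twice_differentiable_at :: "(real^'n::finite \<Rightarrow> 'b::real_normed_vector) \<Rightarrow> real^'n \<Rightarrow> bool" where
  "twice_differentiable_at f x \<longleftrightarrow>
     (\<forall>\<^sub>F y in nhds x. f differentiable at y) \<and> (\<forall>a. pd a f differentiable at x)"

lemma twice_differentiable_at_imp_differentiable:
  "twice_differentiable_at f x \<Longrightarrow> f differentiable at x"
  unfolding twice_differentiable_at_def using eventually_nhds_x_imp_x by blast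

lemma smooth_on_imp_twice_differentiable_at:
  assumes "smooth_on W f" "open W" "x \<in> W"
  shows "twice_differentiable_at (iter_pd as f) x"
  unfolding twice_differentiable_at_def
proof
  show "\<forall>\<^sub>F y in nhds x. iter_pd as f differentiable at y"
    using assms eventually_nhds_in_open[OF assms(2,3)] unfolding smooth_on_def
    by (auto elim: eventually_mono)
  show "\<forall>a. pd a (iter_pd as f) differentiable at x"
    using assms unfolding smooth_on_def by (metis iter_pd.simps(2))
qed

lemma pd_commute:
  assumes "twice_differentiable_at f x"
  shows "pd a (pd b f) x = pd b (pd a f) x"
proof -
  have pd_eq: "pd c f = (\<lambda>y. frechet_derivative f (at y) (axis c 1))" for c
    by (simp add: pd_def fun_eq_iff)
  show ?thesis
    using assms frechet_derivative_commute[where x=x and f=f and u="axis b 1" and v="axis a 1"]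
    unfolding twice_differentiable_at_def by (simp add: pd_def[of a] pd_def[of b] pd_eq)
qed

lemma twice_differentiable_atI:
  assumes "\<forall>\<^sub>F y in nhds x. f differentiable at y"
    and "\<And>a. \<forall>\<^sub>F y in nhds x. pd a f y = f' a y" and "\<And>a. f' a differentiable at x"
  shows "twice_differentiable_at f x"
  using assms differentiable_cong_nhds unfolding twice_differentiable_at_def by blast

lemma twice_differentiable_at_diff:
  assumes "twice_differentiable_at f x" "twice_differentiable_at g x"
  shows "twice_differentiable_at (\<lambda>y. f y - g y) x"
proof (rule twice_differentiable_atI[where f'="\<lambda>a y. pd a f y - pd a g y"])
  have near: "\<forall>\<^sub>F y in nhds x. f differentiable at y \<and> g differentiable at y"
    using assms unfolding twice_differentiable_at_def by (simp add: eventually_conj)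
  then show "\<forall>\<^sub>F y in nhds x. (\<lambda>y. f y - g y) differentiable at y"
    by (auto elim: eventually_mono)
  show "\<forall>\<^sub>F y in nhds x. pd a (\<lambda>y. f y - g y) y = pd a f y - pd a g y" for a
    using near by (auto elim: eventually_mono simp: pd_diff)
  show "(\<lambda>y. pd a f y - pd a g y) differentiable at x" for a
    using assms unfolding twice_differentiable_at_def by simp
qed

lemma twice_differentiable_at_add:
  assumes "twice_differentiable_at f x" "twice_differentiable_at g x"
  shows "twice_differentiable_at (\<lambda>y. f y + g y) x"
proof (rule twice_differentiable_atI[where f'="\<lambda>a y. pd a f y + pd a g y"])
  have near: "\<forall>\<^sub>F y in nhds x. f differentiable at y \<and> g differentiable at y"
    using assms unfolding twice_differentiable_at_def by (simp add: eventually_conj)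
  then show "\<forall>\<^sub>F y in nhds x. (\<lambda>y. f y + g y) differentiable at y"
    by (auto elim: eventually_mono)
  show "\<forall>\<^sub>F y in nhds x. pd a (\<lambda>y. f y + g y) y = pd a f y + pd a g y" for a
    using near by (auto elim: eventually_mono simp: pd_add)
  show "(\<lambda>y. pd a f y + pd a g y) differentiable at x" for a
    using assms unfolding twice_differentiable_at_def by simp
qed

lemma (in bounded_bilinear) twice_differentiable_at_prod:
  assumes "twice_differentiable_at f x" "twice_differentiable_at g x"
  shows "twice_differentiable_at (\<lambda>y. prod (f y) (g y)) x"
proof (rule twice_differentiable_atI[where f'="\<lambda>a y. prod (f y) (pd a g y) + prod (pd a f y) (g y)"])
  have near: "\<forall>\<^sub>F y in nhds x. f differentiable at y \<and> g differentiable at y"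
    using assms unfolding twice_differentiable_at_def by (simp add: eventually_conj)
  then show "\<forall>\<^sub>F y in nhds x. (\<lambda>y. prod (f y) (g y)) differentiable at y"
    by (auto elim: eventually_mono simp: differentiable_prod)
  show "\<forall>\<^sub>F y in nhds x. pd a (\<lambda>y. prod (f y) (g y)) y = prod (f y) (pd a g y) + prod (pd a f y) (g y)"
    for a
    using near by (auto elim: eventually_mono simp: pd_prod)
  show "(\<lambda>y. prod (f y) (pd a g y) + prod (pd a f y) (g y)) differentiable at x" for a
    using assms twice_differentiable_at_imp_differentiable[OF assms(1)]
      twice_differentiable_at_imp_differentiable[OF assms(2)]
    unfolding twice_differentiable_at_def by (simp add: differentiable_prod)
qed

lemmas twice_differentiable_at_matrix_vector_mult =
  bounded_bilinear.twice_differentiable_at_prod[OF bounded_bilinear_matrix_vector_mult]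

lemma differentiable_covD:
  assumes "\<Gamma> c differentiable at x" "\<eta> differentiable at x" "pd c \<eta> differentiable at x"
  shows "covD \<Gamma> c \<eta> differentiable at x"
  unfolding covD_def[abs_def] using assms
  by (intro differentiable_add differentiable_matrix_vector_mult)

lemma pd_covD:
  assumes "\<Gamma> c differentiable at x" "\<eta> differentiable at x" "pd c \<eta> differentiable at x"
  shows "pd a (covD \<Gamma> c \<eta>) x = pd a (pd c \<eta>) x + \<Gamma> c x *v pd a \<eta> x + pd a (\<Gamma> c) x *v \<eta> x"
  unfolding covD_def[abs_def] using assms
  by (simp add: pd_add differentiable_matrix_vector_mult pd_matrix_vector_mult)

lemma twice_differentiable_at_covD:
  assumes "twice_differentiable_at (\<Gamma> c) x" "twice_differentiable_at \<eta> x"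
    and "twice_differentiable_at (pd c \<eta>) x"
  shows "twice_differentiable_at (covD \<Gamma> c \<eta>) x"
  unfolding covD_def[abs_def] using assms
  by (intro twice_differentiable_at_add twice_differentiable_at_matrix_vector_mult)

lemma extD_diff:
  assumes "\<And>c. \<phi> c differentiable at x" "\<And>c. \<phi>' c differentiable at x"
  shows "extD \<Gamma> (\<lambda>c y. \<phi> c y - \<phi>' c y) a b x = extD \<Gamma> \<phi> a b x - extD \<Gamma> \<phi>' a b x"
  unfolding extD_def covD_def using assms
  by (simp add: pd_diff algebra_simps matrix_vector_mult_diff_distrib)

lemma extD_covD:
  assumes "\<And>c. \<Gamma> c differentiable at x" "twice_differentiable_at \<eta> x"
  shows "extD \<Gamma> (\<lambda>c. covD \<Gamma> c \<eta>) a b x = curv \<Gamma> a b x *v \<eta> x"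
proof -
  have "\<eta> differentiable at x" "pd c \<eta> differentiable at x" for c
    using assms(2) twice_differentiable_at_imp_differentiable unfolding twice_differentiable_at_def
    by blast+
  then show ?thesis
    unfolding extD_def covD_def[of \<Gamma> a] covD_def[of \<Gamma> b] curv_def
    using assms
    by (simp add: pd_covD[unfolded covD_def[abs_def]] pd_commute[of \<eta> x a b] algebra_simps
        scaleR_matrix_vector_assoc[symmetric] matrix_vector_mult_scaleR matrix_vector_mul_assoc[symmetric])
qed

text \<open>(D^wedge omega)_abc = D_[a omega_bc] on E-valued 2-forms; for omega skew in its two indices
  the skew-symmetrisation reduces to this cyclic sum, as in kappa1.\<close>
definition extD2 :: "('n::finite \<Rightarrow> real^'n \<Rightarrow> real^'m::finite^'m) \<Rightarrow> ('n \<Rightarrow> 'n \<Rightarrow> real^'n \<Rightarrow> real^'m)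
    \<Rightarrow> 'n \<Rightarrow> 'n \<Rightarrow> 'n \<Rightarrow> real^'n \<Rightarrow> real^'m" where
  "extD2 \<Gamma> \<omega> a b c x = (1/3) *\<^sub>R (covD \<Gamma> a (\<omega> b c) x + covD \<Gamma> b (\<omega> c a) x + covD \<Gamma> c (\<omega> a b) x)"

lemma extD2_eq_0:
  assumes "\<forall>\<^sub>F y in nhds x. \<forall>a b. \<omega> a b y = 0"
  shows "extD2 \<Gamma> \<omega> a b c x = 0"
proof -
  have "\<forall>\<^sub>F y in nhds x. \<omega> b c y = 0" for b c
    using assms by (rule eventually_mono) simp
  then have "pd a (\<omega> b c) x = 0" for a b c
    by (simp add: pd_cong_nhds[where g="\<lambda>_. 0"] pd_const)
  moreover have "\<omega> a b x = 0" for a b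
    using eventually_nhds_x_imp_x[OF assms] by blast
  ultimately show ?thesis
    unfolding extD2_def covD_def by simp
qed

lemma extD2_extD:
  assumes "\<And>a. \<Gamma> a differentiable at x" "\<And>c. twice_differentiable_at (\<phi> c) x"
  shows "extD2 \<Gamma> (extD \<Gamma> \<phi>) a b c x = kappa1 \<Gamma> x (\<lambda>c. \<phi> c x) a b c"
proof -
  have d: "\<phi> c differentiable at x" "pd a (\<phi> c) differentiable at x" for a c
    using assms(2) twice_differentiable_at_imp_differentiable unfolding twice_differentiable_at_def
    by blast+
  have pd_extD: "pd a (extD \<Gamma> \<phi> b c) x
      = (1/2) *\<^sub>R (pd a (covD \<Gamma> b (\<phi> c)) x - pd a (covD \<Gamma> c (\<phi> b)) x)" for a b c
    unfolding extD_def[abs_def] using assms(1) d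
    by (simp add: pd_scaleR pd_diff differentiable_covD)
  show ?thesis
    unfolding extD2_def covD_def[of \<Gamma> _ "extD \<Gamma> \<phi> _ _"] pd_extD kappa1_def curv_def
    unfolding extD_def covD_def[of \<Gamma> _ "\<phi> _"]
    using assms d
    by (simp add: pd_covD[unfolded covD_def[abs_def]] pd_commute algebra_simps
        scaleR_matrix_vector_assoc[symmetric] matrix_vector_mult_scaleR matrix_vector_mul_assoc[symmetric])
qed

lemma kappa1_const:
  "kappa1 \<Gamma> x (\<lambda>_. v) a b c = (1/3) *\<^sub>R (kappa \<Gamma> x v a b + kappa \<Gamma> x v b c + kappa \<Gamma> x v c a)"
  by (simp add: kappa1_def kappa_def)

lemma inj_kappa1_imp_inj_kappa:
  assumes "inj (kappa1 \<Gamma> x)"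
  shows "inj (kappa \<Gamma> x)"
proof (rule injI)
  fix v w
  assume "kappa \<Gamma> x v = kappa \<Gamma> x w"
  then have "kappa1 \<Gamma> x (\<lambda>_. v) = kappa1 \<Gamma> x (\<lambda>_. w)"
    by (simp add: fun_eq_iff kappa1_const)
  then have "(\<lambda>_::'a. v) = (\<lambda>_. w)"
    by (rule injD[OF assms])
  then show "v = w"
    by (simp add: fun_eq_iff)
qed

lemma eq_covD_if_extD_eq_kappa:
  assumes W: "open W" "y \<in> W"
    and \<Gamma>: "\<And>a. smooth_on W (\<Gamma> a)" and inj: "inj (kappa1 \<Gamma> y)"
    and \<phi>: "\<And>c. smooth_on W (\<phi> c)" and \<psi>: "smooth_on W \<psi>"
    and eq: "\<And>x a b. x \<in> W \<Longrightarrow> extD \<Gamma> \<phi> a b x = kappa \<Gamma> x (\<psi> x) a b"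
  shows "\<phi> c y = covD \<Gamma> c \<psi> y"
proof -
  define P where "P c x = \<phi> c x - covD \<Gamma> c \<psi> x" for c x
  have twice: "twice_differentiable_at (\<Gamma> a) x" "twice_differentiable_at (\<phi> c) x"
    "twice_differentiable_at \<psi> x" "twice_differentiable_at (covD \<Gamma> c \<psi>) x"
    if "x \<in> W" for a c x
  proof -
    note smooth = smooth_on_imp_twice_differentiable_at[OF _ W(1) that, where as="[]", simplified]
    have "twice_differentiable_at (pd c \<psi>) x"
      using smooth_on_imp_twice_differentiable_at[OF \<psi> W(1) that, where as="[c]"] by simp
    then show "twice_differentiable_at (\<Gamma> a) x" "twice_differentiable_at (\<phi> c) x"
      "twice_differentiable_at \<psi> x" "twice_differentiable_at (covD \<Gamma> c \<psi>) x"
      using \<Gamma> \<phi> \<psi> by (simp_all add: smooth twice_differentiable_at_covD)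
  qed
  have "extD \<Gamma> P a b x = 0" if "x \<in> W" for a b x
  proof -
    have "extD \<Gamma> P a b x = extD \<Gamma> \<phi> a b x - extD \<Gamma> (\<lambda>c. covD \<Gamma> c \<psi>) a b x"
      unfolding P_def[abs_def] using twice[OF that]
      by (intro extD_diff) (auto intro: twice_differentiable_at_imp_differentiable)
    also have "\<dots> = 0"
      using eq[OF that] twice[OF that]
      by (simp add: extD_covD kappa_def twice_differentiable_at_imp_differentiable)
    finally show ?thesis .
  qed
  then have extD_P_vanishes: "\<forall>\<^sub>F x in nhds y. \<forall>a b. extD \<Gamma> P a b x = 0"
    using eventually_nhds_in_open[OF W] by (auto elim: eventually_mono)
  have "kappa1 \<Gamma> y (\<lambda>c. P c y) a b c = 0" for a b c
  proof -
    have "twice_differentiable_at (P c) y" for c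
      unfolding P_def[abs_def] using twice[OF W(2)] by (simp add: twice_differentiable_at_diff)
    then have "kappa1 \<Gamma> y (\<lambda>c. P c y) a b c = extD2 \<Gamma> (extD \<Gamma> P) a b c y"
      using twice[OF W(2)] by (simp add: extD2_extD twice_differentiable_at_imp_differentiable)
    also have "\<dots> = 0"
      by (rule extD2_eq_0[OF extD_P_vanishes])
    finally show ?thesis .
  qed
  then have "(\<lambda>c. P c y) = (\<lambda>_. 0)"
    by (intro injD[OF inj]) (simp add: fun_eq_iff kappa1_def)
  then show ?thesis
    unfolding P_def by (simp add: fun_eq_iff)
qed

lemma generic_imp_exact:
  assumes "connection_on U \<Gamma>" "generic U \<Gamma>"
  shows "exact U \<Gamma>"
  unfolding exact_def
proof (intro allI impI ballI)
  fix W \<phi> \<psi> y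
  assume H: "open W \<and> W \<subseteq> U \<and> (\<forall>c. smooth_on W (\<phi> c)) \<and> smooth_on W \<psi> \<and>
      (\<forall>x\<in>W. \<forall>a b. extD \<Gamma> \<phi> a b x = kappa \<Gamma> x (\<psi> x) a b)"
    and "y \<in> W"
  have "smooth_on W (\<Gamma> a)" for a
    using assms(1) H unfolding connection_on_def smooth_on_def by blast
  moreover have "inj (kappa1 \<Gamma> x)" if "x \<in> W" for x
    using assms(2) H that unfolding generic_def by blast
  ultimately have "\<phi> c x = covD \<Gamma> c \<psi> x" if "x \<in> W" for c x
    using H that by (intro eq_covD_if_extD_eq_kappa[of W]) auto
  then show "\<exists>V \<eta>. open V \<and> y \<in> V \<and> V \<subseteq> W \<and> smooth_on V \<eta> \<and> (\<forall>x\<in>V. \<forall>c. \<phi> c x = covD \<Gamma> c \<eta> x)"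
    using H \<open>y \<in> W\<close> by blast
qed

theorem lemma2p10:
  fixes U :: "(real^'n::finite) set"
    and \<Gamma> :: "'n \<Rightarrow> real^'n \<Rightarrow> real^'m::finite^'m"
  assumes "connection_on U \<Gamma>"
    and "generic U \<Gamma>"
  shows "(\<forall>x\<in>U. inj (kappa \<Gamma> x)) \<and> exact U \<Gamma>"
  using assms inj_kappa1_imp_inj_kappa generic_imp_exact unfolding generic_def by blast

end
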